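(* Assume (SM), (LIP), (POT) and consider the algorithm AILFEM of the context with arbitrary $\lambda_{\mathrm{lin}},\lambda_{\mathrm{alg}}>0$. Define $\tau:=M+3M(L[3M]/\alpha)^{1/2}\ (\ge4M)$. Let $k\in\mathbb{N}_0$ with $0\le k<\underline{k}[\ell]$ and $|||u_\ell^{k,\underline{i}}|||\le\tau$, and let $i_{\min}\in\mathbb{N}$ satisfy $q_{\mathrm{alg}}^{i_{\min}}\le1/3$. Then, for $0<\delta<\min\{1/L[5\tau],\,2\alpha/L[2\tau]^2\}$, it holds that $$0\le\mathcal{E}(u_\ell^{k+1,\underline{i}})-\mathcal{E}(u_\ell^\star)\le q_{\mathcal{E}}[\delta,\tau]^2\,[\mathcal{E}(u_\ell^{k,\underline{i}})-\mathcal{E}(u_\ell^\star)]$$ with the contraction constant $$0\le q_{\mathcal{E}}[\delta,\tau]^2:=1-\Big(\frac1\delta-L[5\tau]\Big)\frac{(1-q_{\mathrm{alg}}^{i_{\min}})^2\delta^2\alpha^2}{L[2\tau]}<1,$$ and $q_{\mathcal{E}}[\delta,\tau]\to1$ as $\delta\to0$. In particular, $$(1-q_{\mathcal{E}}[\delta,\tau]^2)[\mathcal{E}(u_\ell^{k,\underline{i}})-\mathcal{E}(u_\ell^\star)]\le\mathcal{E}(u_\ell^{k,\underline{i}})-\mathcal{E}(u_\ell^{k+1,\underline{i}})\le\mathcal{E}(u_\ell^{k,\underline{i}})-\mathcal{E}(u_\ell^\star).$$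
   Context: Abstract setting. Let $\mathcal{X}$ be a real Hilbert space with scalar product $\langle\!\langle\cdot,\cdot\rangle\!\rangle$ and norm $|||\cdot|||$, with dual space $\mathcal{X}'$ (norm $\|\cdot\|_{\mathcal{X}'}$, duality bracket $\langle\cdot,\cdot\rangle$). Let $\mathcal{A}:\mathcal{X}\to\mathcal{X}'$ be a nonlinear operator and $F\in\mathcal{X}'$ with $\mathcal{A}0\neq F$. Conditions: (SM) there is $\alpha>0$ with $\alpha|||v-w|||^2\le\langle\mathcal{A}v-\mathcal{A}w,v-w\rangle$ for all $v,w\in\mathcal{X}$; (LIP) for every $\vartheta>0$ there is $L[\vartheta]>0$ with $\langle\mathcal{A}v-\mathcal{A}w,\varphi\rangle\le L[\vartheta]\,|||v-w|||\,|||\varphi|||$ for all $v,w,\varphi\in\mathcal{X}$ with $\max\{|||v|||,|||v-w|||\}\le\vartheta$; (POT) there is a Gâteaux differentiable $\mathcal{P}:\mathcal{X}\to\mathbb{R}$ with $\langle\mathcal{A}w,v\rangle=\lim_{t\to0}(\mathcal{P}(w+tv)-\mathcal{P}(w))/t$ for all $v,w$. The energy is $\mathcal{E}(v):=\mathcal{P}(v)-F(v)$. For every closed subspace $\mathcal{Y}\subseteq\mathcal{X}$ there is a unique $u^\star_{\mathcal{Y}}\in\mathcal{Y}$ with $\langle\mathcal{A}u^\star_{\mathcal{Y}},v\rangle=F(v)$ for all $v\in\mathcal{Y}$; $u^\star:=u^\star_{\mathcal{X}}$. Put $M:=\|F-\mathcal{A}0\|_{\mathcal{X}'}/\alpha$.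 Meshes. $\mathcal{T}_0$ is an initial conforming simplicial triangulation; $\mathtt{refine}(\mathcal{T}_H,\mathcal{M}_H)$ is the coarsest newest-vertex-bisection (NVB) refinement of $\mathcal{T}_H$ in which all elements of $\mathcal{M}_H\subseteq\mathcal{T}_H$ are refined; $\mathbb{T}(\mathcal{T}_H)$ is the set of meshes obtained from $\mathcal{T}_H$ by finitely many NVB steps, $\mathbb{T}:=\mathbb{T}(\mathcal{T}_0)$. Each $\mathcal{T}_H\in\mathbb{T}$ is associated with a finite-dimensional subspace $\mathcal{X}_H\subset\mathcal{X}$, nested: $\mathcal{X}_H\subseteq\mathcal{X}_h$ if $\mathcal{T}_h\in\mathbb{T}(\mathcal{T}_H)$. Write $u_H^\star:=u^\star_{\mathcal{X}_H}$. Zarantonello map: for $\delta>0$, $w_H\in\mathcal{X}_H$, $\Phi_H(\delta;w_H)\in\mathcal{X}_H$ is the unique solution of $\langle\!\langle\Phi_H(\delta;w_H),v_H\rangle\!\rangle=\langle\!\langle w_H,v_H\rangle\!\rangle+\delta[F(v_H)-\langle\mathcal{A}w_H,v_H\rangle]$ for all $v_H\in\mathcal{X}_H$. Algebraic solver: there is $0<q_{\mathrm{alg}}<1$ and for each $\mathcal{T}_H$ a map $\Psi_H:\mathcal{X}'\times\mathcal{X}_H\to\mathcal{X}_H$ such that for every $\varphi\in\mathcal{X}'$, with $w_H^\star\in\mathcal{X}_H$ solving $\langle\!\langle w_H^\star,v_H\rangle\!\rangle=\varphi(v_H)$ for all $v_H\in\mathcal{X}_H$, one has $|||w_H^\star-\Psi_H(\varphi;w_H)|||\le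 q_{\mathrm{alg}}|||w_H^\star-w_H|||$ for all $w_H\in\mathcal{X}_H$. One writes $\Psi_H(w_H^\star;\cdot)$ for $\Psi_H(\varphi;\cdot)$. Estimator: for $\mathcal{T}_H\in\mathbb{T}$, $T\in\mathcal{T}_H$, $v_H\in\mathcal{X}_H$ a number $\eta_H(T,v_H)\ge0$ is given; $\eta_H(\mathcal{U},v_H):=(\sum_{T\in\mathcal{U}}\eta_H(T,v_H)^2)^{1/2}$ for $\mathcal{U}\subseteq\mathcal{T}_H$ and $\eta_H(v_H):=\eta_H(\mathcal{T}_H,v_H)$. Index $\ell$ refers to $\mathcal{T}_\ell$, $\mathcal{X}_\ell$, $\Phi_\ell$, $\Psi_\ell$, $\eta_\ell$, $u_\ell^\star$. Algorithm AILFEM. Input: $\mathcal{T}_0$, $0<\theta\le1$, $C_{\mathrm{mark}}\ge1$, $\lambda_{\mathrm{lin}},\lambda_{\mathrm{alg}}>0$, $i_{\min}\in\mathbb{N}$, $\delta>0$, $u_0^{0,0}\in\mathcal{X}_0$ with $|||u_0^{0,0}|||\le2M$; set $u_0^{0,\star}:=u_0^{0,\underline{i}}:=u_0^{0,0}$. For $\ell=0,1,2,\dots$: (I) For $k=1,2,\dots$: set $u_\ell^{k,0}:=u_\ell^{k-1,\underline{i}}$ and $u_\ell^{k,\star}:=\Phi_\ell(\delta;u_\ell^{k-1,\underline{i}})$ (not computed). For $i=1,2,\dots$: compute $u_\ell^{k,i}:=\Psi_\ell(u_\ell^{k,\star};u_\ell^{k,i-1})$ and $\eta_\ell(u_\ell^{k,i})$;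 terminate the $i$-loop with $\underline{i}[\ell,k]:=i$ if $|||u_\ell^{k,i-1}-u_\ell^{k,i}|||\le\lambda_{\mathrm{alg}}[\lambda_{\mathrm{lin}}\eta_\ell(u_\ell^{k,i})+|||u_\ell^{k,i}-u_\ell^{k,0}|||]$ and $i_{\min}\le i$. Write $u_\ell^{k,\underline{i}}:=u_\ell^{k,\underline{i}[\ell,k]}$. Terminate the $k$-loop with $\underline{k}[\ell]:=k$ if $\mathcal{E}(u_\ell^{k,0})-\mathcal{E}(u_\ell^{k,\underline{i}})\le\lambda_{\mathrm{lin}}^2\eta_\ell(u_\ell^{k,\underline{i}})^2$ and $|||u_\ell^{k,\underline{i}}|||\le2M$. (II) Choose $\mathcal{M}_\ell\subseteq\mathcal{T}_\ell$ with $\theta\,\eta_\ell(u_\ell^{\underline{k},\underline{i}})^2\le\eta_\ell(\mathcal{M}_\ell,u_\ell^{\underline{k},\underline{i}})^2$ and $\#\mathcal{M}_\ell\le C_{\mathrm{mark}}\min\{\#\mathcal{U}:\mathcal{U}\subseteq\mathcal{T}_\ell,\ \theta\eta_\ell(u_\ell^{\underline{k},\underline{i}})^2\le\eta_\ell(\mathcal{U},u_\ell^{\underline{k},\underline{i}})^2\}$. (III) $\mathcal{T}_{\ell+1}:=\mathtt{refine}(\mathcal{T}_\ell,\mathcal{M}_\ell)$ and $u_{\ell+1}^{0,0}:=u_{\ell+1}^{0,\underline{i}}:=u_{\ell+1}^{0,\star}:=u_\ell^{\underline{k},\underline{i}}$. Index set: $\mathcal{Q}:=\{(\ell,k,i)\in\mathbb{N}_0^3: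 u_\ell^{k,i}\text{ is used in the algorithm}\}$; $\underline{k}[\ell]:=\sup\{k\in\mathbb{N}:(\ell,k,0)\in\mathcal{Q}\}$, $\underline{i}[\ell,k]:=\sup\{i\in\mathbb{N}:(\ell,k,i)\in\mathcal{Q}\}$. *)

theory Defs
  imports "HOL-Analysis.Analysis" "HOL-Library.Extended_Nat"
begin

text \<open>The Hilbert space X is a type 'a of class real_inner and
complete_space; scalar product = inner, energy norm = norm.  Functionals in X' are
bounded linear maps 'a \<Rightarrow> real; the operator A maps w to the functional A w.\<close>

text \<open>Right-hand side functional of the Zarantonello map:
 v \<mapsto> <<w,v>> + delta (F v - <A w, v>).  Its Riesz representative in X_l is Phi_l(delta; w).\<close>
definition zar_rhs :: "('a::real_inner \<Rightarrow> 'a \<Rightarrow> real) \<Rightarrow> ('a \<Rightarrow> real) \<Rightarrow> real \<Rightarrow> 'a \<Rightarrow> ('a \<Rightarrow> real)" where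
  "zar_rhs A F \<delta> w = (\<lambda>v. inner w v + \<delta> * (F v - A w v))"

text \<open>Inner (algebraic) iterates u^{k,i} = Psi(u^{k,*}; u^{k,i-1}), u^{k,0} = w.\<close>
definition alg_iter :: "(('a::real_inner \<Rightarrow> real) \<Rightarrow> 'a \<Rightarrow> 'a) \<Rightarrow> ('a \<Rightarrow> 'a \<Rightarrow> real) \<Rightarrow> ('a \<Rightarrow> real)
    \<Rightarrow> real \<Rightarrow> 'a \<Rightarrow> nat \<Rightarrow> 'a" where
  "alg_iter \<Psi> A F \<delta> w i = (\<Psi> (zar_rhs A F \<delta> w) ^^ i) w"

definition alg_stop :: "(('a::real_inner \<Rightarrow> real) \<Rightarrow> 'a \<Rightarrow> 'a) \<Rightarrow> ('a \<Rightarrow> 'a \<Rightarrow> real) \<Rightarrow> ('a \<Rightarrow> real)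
    \<Rightarrow> real \<Rightarrow> ('a \<Rightarrow> real) \<Rightarrow> real \<Rightarrow> real \<Rightarrow> nat \<Rightarrow> 'a \<Rightarrow> nat \<Rightarrow> bool" where
  "alg_stop \<Psi> A F \<delta> \<eta> lam_lin lam_alg imin w i \<longleftrightarrow>
     1 \<le> i \<and> imin \<le> i \<and>
     norm (alg_iter \<Psi> A F \<delta> w (i - 1) - alg_iter \<Psi> A F \<delta> w i)
       \<le> lam_alg * (lam_lin * \<eta> (alg_iter \<Psi> A F \<delta> w i) + norm (alg_iter \<Psi> A F \<delta> w i - w))"

definition alg_index :: "(('a::real_inner \<Rightarrow> real) \<Rightarrow> 'a \<Rightarrow> 'a) \<Rightarrow> ('a \<Rightarrow> 'a \<Rightarrow> real) \<Rightarrow> ('a \<Rightarrow> real)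
    \<Rightarrow> real \<Rightarrow> ('a \<Rightarrow> real) \<Rightarrow> real \<Rightarrow> real \<Rightarrow> nat \<Rightarrow> 'a \<Rightarrow> nat" where
  "alg_index \<Psi> A F \<delta> \<eta> lam_lin lam_alg imin w = (LEAST i. alg_stop \<Psi> A F \<delta> \<eta> lam_lin lam_alg imin w i)"

definition ail_step :: "(('a::real_inner \<Rightarrow> real) \<Rightarrow> 'a \<Rightarrow> 'a) \<Rightarrow> ('a \<Rightarrow> 'a \<Rightarrow> real) \<Rightarrow> ('a \<Rightarrow> real)
    \<Rightarrow> real \<Rightarrow> ('a \<Rightarrow> real) \<Rightarrow> real \<Rightarrow> real \<Rightarrow> nat \<Rightarrow> 'a \<Rightarrow> 'a" where
  "ail_step \<Psi> A F \<delta> \<eta> lam_lin lam_alg imin w =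
     alg_iter \<Psi> A F \<delta> w (alg_index \<Psi> A F \<delta> \<eta> lam_lin lam_alg imin w)"

definition ail_iterate :: "(('a::real_inner \<Rightarrow> real) \<Rightarrow> 'a \<Rightarrow> 'a) \<Rightarrow> ('a \<Rightarrow> 'a \<Rightarrow> real) \<Rightarrow> ('a \<Rightarrow> real)
    \<Rightarrow> real \<Rightarrow> ('a \<Rightarrow> real) \<Rightarrow> real \<Rightarrow> real \<Rightarrow> nat \<Rightarrow> 'a \<Rightarrow> nat \<Rightarrow> 'a" where
  "ail_iterate \<Psi> A F \<delta> \<eta> lam_lin lam_alg imin u0 k =
     (ail_step \<Psi> A F \<delta> \<eta> lam_lin lam_alg imin ^^ k) u0"

definition energy :: "('a \<Rightarrow> real) \<Rightarrow> ('a \<Rightarrow> real) \<Rightarrow> 'a \<Rightarrow> real" where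
  "energy P F v = P v - F v"

definition lin_stop :: "(('a::real_inner \<Rightarrow> real) \<Rightarrow> 'a \<Rightarrow> 'a) \<Rightarrow> ('a \<Rightarrow> 'a \<Rightarrow> real) \<Rightarrow> ('a \<Rightarrow> real)
    \<Rightarrow> ('a \<Rightarrow> real) \<Rightarrow> real \<Rightarrow> ('a \<Rightarrow> real) \<Rightarrow> real \<Rightarrow> real \<Rightarrow> nat \<Rightarrow> real \<Rightarrow> 'a \<Rightarrow> nat \<Rightarrow> bool" where
  "lin_stop \<Psi> A F P \<delta> \<eta> lam_lin lam_alg imin M u0 k \<longleftrightarrow>
     1 \<le> k \<and>
     energy P F (ail_iterate \<Psi> A F \<delta> \<eta> lam_lin lam_alg imin u0 (k - 1))
       - energy P F (ail_iterate \<Psi> A F \<delta> \<eta> lam_lin lam_alg imin u0 k)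
       \<le> lam_lin\<^sup>2 * (\<eta> (ail_iterate \<Psi> A F \<delta> \<eta> lam_lin lam_alg imin u0 k))\<^sup>2 \<and>
     norm (ail_iterate \<Psi> A F \<delta> \<eta> lam_lin lam_alg imin u0 k) \<le> 2 * M"

definition lin_index :: "(('a::real_inner \<Rightarrow> real) \<Rightarrow> 'a \<Rightarrow> 'a) \<Rightarrow> ('a \<Rightarrow> 'a \<Rightarrow> real) \<Rightarrow> ('a \<Rightarrow> real)
    \<Rightarrow> ('a \<Rightarrow> real) \<Rightarrow> real \<Rightarrow> ('a \<Rightarrow> real) \<Rightarrow> real \<Rightarrow> real \<Rightarrow> nat \<Rightarrow> real \<Rightarrow> 'a \<Rightarrow> enat" where
  "lin_index \<Psi> A F P \<delta> \<eta> lam_lin lam_alg imin M u0 =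
     (if \<exists>k. lin_stop \<Psi> A F P \<delta> \<eta> lam_lin lam_alg imin M u0 k
      then enat (LEAST k. lin_stop \<Psi> A F P \<delta> \<eta> lam_lin lam_alg imin M u0 k)
      else \<infinity>)"

definition qE2 :: "(real \<Rightarrow> real) \<Rightarrow> real \<Rightarrow> real \<Rightarrow> nat \<Rightarrow> real \<Rightarrow> real \<Rightarrow> real" where
  "qE2 L \<alpha> qalg imin \<tau> \<delta> =
     1 - (1 / \<delta> - L (5 * \<tau>)) * ((1 - qalg ^ imin)\<^sup>2 * \<delta>\<^sup>2 * \<alpha>\<^sup>2) / L (2 * \<tau>)"

end

theory Submission
  imports Defs
begin

text \<open>Write \<open>w\<close> for the current iterate, \<open>z\<close> for the exact Zarantonello update
\<open>\<Phi>(\<delta>; w)\<close> and \<open>y\<close> for the computed iterate, so that \<open>\<parallel>z - y\<parallel> \<le> q \<parallel>z - w\<parallel>\<close> with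
\<open>q = q_alg^i_min \<le> 1/3\<close>. Since \<open>y\<close> is closer to \<open>z\<close> than \<open>w\<close> is,
\<open>\<langle>z - w, y - w\<rangle> \<ge> \<parallel>y - w\<parallel>\<^sup>2/2\<close>, and the Lipschitz bound on the potential turns this into the
energy decrease \<open>E(w) - E(y) \<ge> (1/\<delta> - L[5\<tau>])/2 \<parallel>y - w\<parallel>\<^sup>2\<close>. On the other hand
\<open>\<parallel>y - w\<parallel> \<ge> (1 - q) \<parallel>z - w\<parallel> \<ge> (1 - q) \<delta> \<alpha> \<parallel>u\<^sup>\<star> - w\<parallel>\<close> by strong monotonicity, while
\<open>E(w) - E(u\<^sup>\<star>) \<le> L[2\<tau>]/2 \<parallel>w - u\<^sup>\<star>\<parallel>\<^sup>2\<close> by Galerkin orthogonality and the Lipschitz bound.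
Chaining the three estimates gives the contraction. The radius \<open>\<tau> \<ge> 4M \<ge> 4\<parallel>u\<^sup>\<star>\<parallel>\<close> and
the step size restriction \<open>\<delta> L[2\<tau>] \<le> 2\<close> keep every point involved in the balls on which
\<open>L[2\<tau>]\<close> and \<open>L[5\<tau>]\<close> are valid Lipschitz constants.\<close>

lemma riesz_representation_finite_span:
  fixes \<phi> :: "'a::real_inner \<Rightarrow> real"
  assumes "finite B" and "linear \<phi>"
  obtains z where "z \<in> span B" and "\<And>v. v \<in> span B \<Longrightarrow> inner z v = \<phi> v"
proof -
  obtain C where C: "finite C" "span C = span B" "pairwise orthogonal C"
    using basis_orthogonal[OF assms(1)] by blast
  define z where "z = (\<Sum>c\<in>C. (\<phi> c / inner c c) *\<^sub>R c)"
  have "z \<in> span B"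
    unfolding z_def C(2)[symmetric] by (intro span_sum span_scale span_base)
  moreover have "inner z b = \<phi> b" if "b \<in> C" for b
  proof -
    have "inner z b = (\<Sum>c\<in>C. (\<phi> c / inner c c) * inner c b)"
      unfolding z_def by (simp add: inner_sum_left)
    also have "\<dots> = (\<phi> b / inner b b) * inner b b"
      using C(1,3) that
      by (subst sum.remove[OF C(1) that], subst sum.neutral)
         (auto simp: pairwise_def orthogonal_def)
    also have "\<dots> = \<phi> b"
      using linear_0[OF assms(2)] by (cases "b = 0") auto
    finally show ?thesis .
  qed
  then have "span C \<subseteq> {v. inner z v = \<phi> v}"
    using linear_add[OF assms(2)] linear_scale[OF assms(2)] linear_0[OF assms(2)]
    by (intro span_minimal) (auto simp: subspace_def inner_add_right)
  ultimately show thesis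
    using that C(2) by auto
qed

lemma potential_line_has_derivative:
  fixes A :: "'a::real_normed_vector \<Rightarrow> 'a \<Rightarrow> real" and P :: "'a \<Rightarrow> real"
  assumes POT: "\<And>v w. ((\<lambda>t. (P (w + t *\<^sub>R v) - P w) / t) \<longlongrightarrow> A w v) (at 0)"
  shows "((\<lambda>t. P (x + t *\<^sub>R d)) has_real_derivative A (x + s *\<^sub>R d) d) (at s)"
  unfolding DERIV_def
  using POT[where v = d and w = "x + s *\<^sub>R d"] by (simp add: scaleR_add_left add.assoc)

lemma potential_remainder_le:
  fixes A :: "'a::real_normed_vector \<Rightarrow> 'a \<Rightarrow> real" and P :: "'a \<Rightarrow> real"
  assumes POT: "\<And>v w. ((\<lambda>t. (P (w + t *\<^sub>R v) - P w) / t) \<longlongrightarrow> A w v) (at 0)"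
    and LIP: "\<And>\<theta> v w \<phi>. \<theta> > 0 \<Longrightarrow> max (norm v) (norm (v - w)) \<le> \<theta> \<Longrightarrow>
                 A v \<phi> - A w \<phi> \<le> L \<theta> * norm (v - w) * norm \<phi>"
    and "\<theta> > 0" and "norm x + norm d \<le> \<theta>"
  shows "P (x + d) - P x - A x d \<le> L \<theta> / 2 * (norm d)\<^sup>2"
proof -
  define g where "g t = P (x + t *\<^sub>R d) - t * A x d - L \<theta> / 2 * t\<^sup>2 * (norm d)\<^sup>2" for t
  have "g 1 \<le> g 0"
  proof (rule DERIV_nonpos_imp_nonincreasing[of 0 1 g])
    fix t :: real
    assume t: "0 \<le> t" "t \<le> 1"
    have "(g has_real_derivative A (x + t *\<^sub>R d) d - A x d - L \<theta> * t * (norm d)\<^sup>2) (at t)"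
      unfolding g_def by (auto intro!: derivative_eq_intros potential_line_has_derivative[OF POT])
    moreover have "norm (t *\<^sub>R d) \<le> norm d"
      using t by (simp add: mult_left_le_one_le)
    then have "max (norm (x + t *\<^sub>R d)) (norm (t *\<^sub>R d)) \<le> \<theta>"
      using norm_triangle_ineq[of x "t *\<^sub>R d"] norm_ge_zero[of x] assms(4) by linarith
    then have "A (x + t *\<^sub>R d) d - A x d \<le> L \<theta> * t * (norm d)\<^sup>2"
      using LIP[OF \<open>\<theta> > 0\<close>, of "x + t *\<^sub>R d" x d] t by (simp add: power2_eq_square)
    ultimately show "\<exists>y. (g has_real_derivative y) (at t) \<and> y \<le> 0"
      by auto
  qed simp
  then show ?thesis
    unfolding g_def by simp
qed

lemma potential_remainder_nonneg:
  fixes A :: "'a::real_normed_vector \<Rightarrow> 'a \<Rightarrow> real" and P :: "'a \<Rightarrow> real"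
  assumes POT: "\<And>v w. ((\<lambda>t. (P (w + t *\<^sub>R v) - P w) / t) \<longlongrightarrow> A w v) (at 0)"
    and mono_A: "\<And>v w. 0 \<le> A v (v - w) - A w (v - w)"
    and linear_A: "\<And>w. linear (A w)"
  shows "0 \<le> P (x + d) - P x - A x d"
proof -
  define g where "g t = P (x + t *\<^sub>R d) - t * A x d" for t
  have "g 0 \<le> g 1"
  proof (rule DERIV_nonneg_imp_nondecreasing[of 0 1 g])
    fix t :: real
    assume "0 \<le> t"
    have "(g has_real_derivative A (x + t *\<^sub>R d) d - A x d) (at t)"
      unfolding g_def by (auto intro!: derivative_eq_intros potential_line_has_derivative[OF POT])
    moreover have "0 \<le> t * (A (x + t *\<^sub>R d) d - A x d)"
      using mono_A[of "x + t *\<^sub>R d" x] linear_scale[OF linear_A] by (simp add: algebra_simps)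
    then have "0 \<le> A (x + t *\<^sub>R d) d - A x d" if "t \<noteq> 0"
      using \<open>0 \<le> t\<close> that by (simp add: zero_le_mult_iff)
    ultimately show "\<exists>y. (g has_real_derivative y) (at t) \<and> 0 \<le> y"
      by (cases "t = 0") auto
  qed simp
  then show ?thesis
    unfolding g_def by simp
qed

lemma eventually_increment_le_displacement:
  fixes x :: "nat \<Rightarrow> 'a::real_normed_vector"
  assumes conv: "\<And>i. norm (z - x i) \<le> q ^ i * norm (z - x 0)"
    and q: "0 \<le> q" "q < 1" and "0 < c"
  shows "eventually (\<lambda>j. norm (x j - x (Suc j)) \<le> c * norm (x (Suc j) - x 0)) sequentially"
proof -
  define D where "D = norm (z - x 0)"
  have "eventually (\<lambda>j. q ^ j < c * (1 - q) / 2) sequentially"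
    using q \<open>0 < c\<close> by (intro order_tendstoD(2)[OF LIMSEQ_power_zero]) auto
  moreover have "norm (x j - x (Suc j)) \<le> c * norm (x (Suc j) - x 0)"
    if small: "q ^ j < c * (1 - q) / 2" for j
  proof -
    have "q ^ Suc j \<le> q ^ j" "q ^ Suc j \<le> q"
      using q power_decreasing[of 1 "Suc j" q] by (auto simp: mult_left_le_one_le)
    have "(1 - q) * D \<le> norm (x (Suc j) - x 0)"
      using norm_triangle_ineq[of "x (Suc j) - x 0" "z - x (Suc j)"] conv[of "Suc j"]
        mult_right_mono[OF \<open>q ^ Suc j \<le> q\<close>, of D]
      unfolding D_def by (simp add: algebra_simps)
    have "norm (x j - x (Suc j)) \<le> norm (z - x j) + norm (z - x (Suc j))"
      by (metis norm_diff_triangle_le norm_minus_commute order_refl)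
    also have "\<dots> \<le> (q ^ j + q ^ Suc j) * D"
      using conv[of j] conv[of "Suc j"] unfolding D_def by (simp add: distrib_right)
    also have "\<dots> \<le> (c * (1 - q)) * D"
      using small \<open>q ^ Suc j \<le> q ^ j\<close> by (intro mult_right_mono) (auto simp: D_def)
    also have "\<dots> = c * ((1 - q) * D)"
      by simp
    also have "\<dots> \<le> c * norm (x (Suc j) - x 0)"
      using \<open>(1 - q) * D \<le> _\<close> \<open>0 < c\<close> by (simp add: mult_left_mono)
    finally show ?thesis .
  qed
  ultimately show ?thesis
    by (auto elim: eventually_mono)
qed

definition contractive_solver :: "'a::real_inner set \<Rightarrow> (('a \<Rightarrow> real) \<Rightarrow> 'a \<Rightarrow> 'a) \<Rightarrow> real \<Rightarrow> bool"
  where "contractive_solver V \<Psi> q \<longleftrightarrow>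
    (\<forall>\<phi> ws w. bounded_linear \<phi> \<longrightarrow> ws \<in> V \<longrightarrow> (\<forall>v\<in>V. inner ws v = \<phi> v) \<longrightarrow> w \<in> V \<longrightarrow>
       \<Psi> \<phi> w \<in> V \<and> norm (ws - \<Psi> \<phi> w) \<le> q * norm (ws - w))"

lemma solver_iterates_contract:
  fixes \<Psi> :: "('a::real_inner \<Rightarrow> real) \<Rightarrow> 'a \<Rightarrow> 'a"
  assumes Psi: "contractive_solver V \<Psi> qalg"
    and "0 \<le> qalg" and "bounded_linear \<phi>"
    and z: "z \<in> V" "\<forall>v\<in>V. inner z v = \<phi> v" and "w \<in> V"
  shows "(\<Psi> \<phi> ^^ i) w \<in> V \<and> norm (z - (\<Psi> \<phi> ^^ i) w) \<le> qalg ^ i * norm (z - w)"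
proof (induction i)
  case 0
  then show ?case
    using \<open>w \<in> V\<close> by simp
next
  case (Suc i)
  have "\<Psi> \<phi> ((\<Psi> \<phi> ^^ i) w) \<in> V
      \<and> norm (z - \<Psi> \<phi> ((\<Psi> \<phi> ^^ i) w)) \<le> qalg * norm (z - (\<Psi> \<phi> ^^ i) w)"
    using Psi \<open>bounded_linear \<phi>\<close> z Suc unfolding contractive_solver_def by blast
  moreover have "qalg * norm (z - (\<Psi> \<phi> ^^ i) w) \<le> qalg * (qalg ^ i * norm (z - w))"
    using Suc \<open>0 \<le> qalg\<close> by (intro mult_left_mono) auto
  ultimately show ?case
    by auto
qed

lemma alg_stop_alg_index:
  assumes conv: "\<And>i. norm (z - alg_iter \<Psi> A F \<delta> w i) \<le> qalg ^ i * norm (z - w)"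
    and "0 \<le> qalg" "qalg < 1" and "0 < lam_lin" "0 < lam_alg" and "\<And>v. 0 \<le> \<eta> v"
  shows "alg_stop \<Psi> A F \<delta> \<eta> lam_lin lam_alg imin w (alg_index \<Psi> A F \<delta> \<eta> lam_lin lam_alg imin w)"
proof -
  let ?x = "alg_iter \<Psi> A F \<delta> w"
  have "?x 0 = w"
    by (simp add: alg_iter_def)
  then have "eventually (\<lambda>j. imin \<le> j \<and> norm (?x j - ?x (Suc j)) \<le> lam_alg * norm (?x (Suc j) - w))
      sequentially"
    using eventually_increment_le_displacement[of z ?x qalg lam_alg] conv assms(2-5)
    by (auto intro: eventually_conj)
  then obtain j where "imin \<le> j" and j: "norm (?x j - ?x (Suc j)) \<le> lam_alg * norm (?x (Suc j) - w)"
    by (auto simp: eventually_sequentially)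
  moreover have "lam_alg * norm (?x (Suc j) - w)
      \<le> lam_alg * (lam_lin * \<eta> (?x (Suc j)) + norm (?x (Suc j) - w))"
    using assms(4-6) by (intro mult_left_mono) auto
  ultimately have "alg_stop \<Psi> A F \<delta> \<eta> lam_lin lam_alg imin w (Suc j)"
    unfolding alg_stop_def by auto
  then show ?thesis
    unfolding alg_index_def by (rule LeastI)
qed

lemma bounded_linear_zar_rhs:
  assumes "bounded_linear (A w)" and "bounded_linear F"
  shows "bounded_linear (zar_rhs A F \<delta> w)"
  unfolding zar_rhs_def
  by (intro bounded_linear_add bounded_linear_inner_right bounded_linear_const_mult
      bounded_linear_sub assms)

lemma ail_step_contraction:
  fixes \<Psi> :: "('a::real_inner \<Rightarrow> real) \<Rightarrow> 'a \<Rightarrow> 'a"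
  assumes Psi: "contractive_solver V \<Psi> qalg"
    and qalg: "0 \<le> qalg" "qalg < 1" and "0 < lam_lin" "0 < lam_alg" and "\<And>v. 0 \<le> \<eta> v"
    and "bounded_linear (zar_rhs A F \<delta> w)"
    and z: "z \<in> V" "\<forall>v\<in>V. inner z v = zar_rhs A F \<delta> w v" and "w \<in> V"
  shows "ail_step \<Psi> A F \<delta> \<eta> lam_lin lam_alg imin w \<in> V
    \<and> norm (z - ail_step \<Psi> A F \<delta> \<eta> lam_lin lam_alg imin w) \<le> qalg ^ imin * norm (z - w)"
proof -
  let ?I = "alg_index \<Psi> A F \<delta> \<eta> lam_lin lam_alg imin w"
  have iter: "alg_iter \<Psi> A F \<delta> w i \<in> V
      \<and> norm (z - alg_iter \<Psi> A F \<delta> w i) \<le> qalg ^ i * norm (z - w)" for i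
    unfolding alg_iter_def
    by (rule solver_iterates_contract[OF Psi qalg(1) assms(7-10)])
  then have "imin \<le> ?I"
    using alg_stop_alg_index[of z] assms(2-6) unfolding alg_stop_def by blast
  then have "qalg ^ ?I * norm (z - w) \<le> qalg ^ imin * norm (z - w)"
    using qalg by (intro mult_right_mono power_decreasing) auto
  then show ?thesis
    using iter[of ?I] unfolding ail_step_def by auto
qed

lemma ail_iterate_step_contraction:
  fixes \<Psi> :: "('a::real_inner \<Rightarrow> real) \<Rightarrow> 'a \<Rightarrow> 'a" and \<delta> :: real and imin :: nat
  assumes Psi: "contractive_solver V \<Psi> qalg"
    and qalg: "0 \<le> qalg" "qalg < 1" and lam: "0 < lam_lin" "0 < lam_alg" and eta: "\<And>v. 0 \<le> \<eta> v"
    and A_bl: "\<And>w. bounded_linear (A w)" and F_bl: "bounded_linear F"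
    and "finite B" "V = span B" and "u0 \<in> V"
  defines "u \<equiv> ail_iterate \<Psi> A F \<delta> \<eta> lam_lin lam_alg imin u0"
  obtains z where "z \<in> V" "\<forall>v\<in>V. inner z v = zar_rhs A F \<delta> (u k) v"
    and "u k \<in> V" "u (Suc k) \<in> V" "norm (z - u (Suc k)) \<le> qalg ^ imin * norm (z - u k)"
proof -
  have riesz: "\<exists>z\<in>V. \<forall>v\<in>V. inner z v = zar_rhs A F \<delta> w v" for w
  proof -
    obtain z where "z \<in> span B" "\<And>v. v \<in> span B \<Longrightarrow> inner z v = zar_rhs A F \<delta> w v"
      using riesz_representation_finite_span[OF \<open>finite B\<close>
          bounded_linear.linear[OF bounded_linear_zar_rhs[where A = A and \<delta> = \<delta> and w = w, OF A_bl F_bl]]]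
      by blast
    then show ?thesis
      using \<open>V = span B\<close> by auto
  qed
  have step: "ail_step \<Psi> A F \<delta> \<eta> lam_lin lam_alg imin w \<in> V
      \<and> norm (z - ail_step \<Psi> A F \<delta> \<eta> lam_lin lam_alg imin w) \<le> qalg ^ imin * norm (z - w)"
    if "z \<in> V" "\<forall>v\<in>V. inner z v = zar_rhs A F \<delta> w v" "w \<in> V" for z w
    by (rule ail_step_contraction[OF Psi qalg lam eta
          bounded_linear_zar_rhs[where A = A and \<delta> = \<delta> and w = w, OF A_bl F_bl] that])
  have u_Suc: "u (Suc j) = ail_step \<Psi> A F \<delta> \<eta> lam_lin lam_alg imin (u j)" for j
    by (simp add: u_def ail_iterate_def)
  have u_in: "u j \<in> V" for j
  proof (induction j)
    case 0
    then show ?case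
      using \<open>u0 \<in> V\<close> by (simp add: u_def ail_iterate_def)
  next
    case (Suc j)
    obtain z where "z \<in> V" "\<forall>v\<in>V. inner z v = zar_rhs A F \<delta> (u j) v"
      using riesz by blast
    then show ?case
      using step Suc u_Suc by simp
  qed
  obtain z where z: "z \<in> V" "\<forall>v\<in>V. inner z v = zar_rhs A F \<delta> (u k) v"
    using riesz by blast
  moreover have "u (Suc k) \<in> V \<and> norm (z - u (Suc k)) \<le> qalg ^ imin * norm (z - u k)"
    using step[OF z u_in] unfolding u_Suc .
  ultimately show thesis
    using that u_in by blast
qed

lemma norm_increment_bounds:
  fixes w y z :: "'a::real_normed_vector"
  assumes "norm (z - y) \<le> q * norm (z - w)"
  shows "(1 - q) * norm (z - w) \<le> norm (y - w)" and "norm (y - w) \<le> (1 + q) * norm (z - w)"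
  using norm_triangle_ineq[of "y - w" "z - y"] norm_triangle_ineq[of "y - z" "z - w"] assms
  by (simp_all add: norm_minus_commute algebra_simps)

locale strongly_monotone_galerkin =
  fixes A :: "'a::real_inner \<Rightarrow> 'a \<Rightarrow> real" and F P :: "'a \<Rightarrow> real"
    and \<alpha> :: real and L :: "real \<Rightarrow> real" and V :: "'a set" and ustar :: 'a
  assumes A_bl: "\<And>w. bounded_linear (A w)"
    and F_bl: "bounded_linear F"
    and SM_pos: "\<alpha> > 0"
    and SM: "\<And>v w. \<alpha> * (norm (v - w))\<^sup>2 \<le> A v (v - w) - A w (v - w)"
    and LIP_pos: "\<And>\<theta>. \<theta> > 0 \<Longrightarrow> L \<theta> > 0"
    and LIP: "\<And>\<theta> v w \<phi>. \<theta> > 0 \<Longrightarrow> max (norm v) (norm (v - w)) \<le> \<theta> \<Longrightarrow>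
                 A v \<phi> - A w \<phi> \<le> L \<theta> * norm (v - w) * norm \<phi>"
    and POT: "\<And>v w. ((\<lambda>t. (P (w + t *\<^sub>R v) - P w) / t) \<longlongrightarrow> A w v) (at 0)"
    and V_sub: "subspace V"
    and ustar_in: "ustar \<in> V"
    and galerkin: "\<And>v. v \<in> V \<Longrightarrow> A ustar v = F v"
begin

lemma linear_A: "linear (A w)" and linear_F: "linear F"
  using A_bl F_bl bounded_linear.linear by blast+

lemma alpha_le_L:
  assumes "A 0 \<noteq> F" and "\<theta> > 0"
  shows "\<alpha> \<le> L \<theta>"
proof -
  obtain x where "A 0 x \<noteq> F x"
    using assms(1) by blast
  then have "x \<noteq> 0"
    using linear_0[OF linear_A] linear_0[OF linear_F] by auto
  define y where "y = (\<theta> / norm x) *\<^sub>R x"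
  have "norm y = \<theta>"
    unfolding y_def using \<open>x \<noteq> 0\<close> \<open>\<theta> > 0\<close> by simp
  have "\<alpha> * (norm y)\<^sup>2 \<le> A y y - A 0 y"
    using SM[of y 0] by simp
  also have "\<dots> \<le> L \<theta> * norm y * norm y"
    using LIP[OF \<open>\<theta> > 0\<close>, of y 0 y] \<open>norm y = \<theta>\<close> by simp
  finally show ?thesis
    using \<open>norm y = \<theta>\<close> \<open>\<theta> > 0\<close> by (simp add: power2_eq_square)
qed

lemma norm_ustar_le: "norm ustar \<le> onorm (\<lambda>v. F v - A 0 v) / \<alpha>"
proof -
  have "\<alpha> * (norm ustar)\<^sup>2 \<le> F ustar - A 0 ustar"
    using SM[of ustar 0] galerkin[OF ustar_in] by simp
  also have "\<dots> \<le> onorm (\<lambda>v. F v - A 0 v) * norm ustar"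
    using onorm[OF bounded_linear_sub[OF F_bl A_bl[of 0]], of ustar] by (simp add: abs_le_iff)
  finally have "\<alpha> * norm ustar \<le> onorm (\<lambda>v. F v - A 0 v)" if "ustar \<noteq> 0"
    using that by (simp add: power2_eq_square)
  then show ?thesis
    using SM_pos onorm_pos_le[OF bounded_linear_sub[OF F_bl A_bl[of 0]]]
    by (cases "ustar = 0") (auto simp: pos_le_divide_eq mult.commute)
qed

lemma radius_bounds:
  assumes "A 0 \<noteq> F"
    and M: "M = onorm (\<lambda>v. F v - A 0 v) / \<alpha>" and \<tau>: "\<tau> = M + 3 * M * sqrt (L (3 * M) / \<alpha>)"
  shows "0 < M" and "4 * M \<le> \<tau>" and "4 * norm ustar \<le> \<tau>"
proof -
  obtain x where "A 0 x \<noteq> F x"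
    using assms(1) by blast
  then show "0 < M"
    using onorm_pos_lt[OF bounded_linear_sub[OF F_bl A_bl[of 0]]] M SM_pos by auto
  then have "1 \<le> sqrt (L (3 * M) / \<alpha>)"
    using alpha_le_L[OF assms(1), of "3 * M"] SM_pos by simp
  then show "4 * M \<le> \<tau>"
    using \<tau> \<open>0 < M\<close> by simp
  then show "4 * norm ustar \<le> \<tau>"
    using norm_ustar_le M by simp
qed

lemma energy_error_eq:
  assumes "v \<in> V"
  shows "energy P F v - energy P F ustar = P (ustar + (v - ustar)) - P ustar - A ustar (v - ustar)"
  using galerkin[of "v - ustar"] assms ustar_in V_sub linear_diff[OF linear_F]
  by (simp add: energy_def subspace_diff)

lemma energy_error_nonneg:
  assumes "v \<in> V"
  shows "0 \<le> energy P F v - energy P F ustar"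
  unfolding energy_error_eq[OF assms]
proof (rule potential_remainder_nonneg[OF POT _ linear_A])
  have "0 \<le> \<alpha> * (norm (v - w))\<^sup>2" for v w
    using SM_pos by simp
  then show "0 \<le> A v (v - w) - A w (v - w)" for v w
    using SM[of v w] order_trans by blast
qed

lemma energy_error_le:
  assumes "v \<in> V" and "\<theta> > 0" and "norm ustar + norm (v - ustar) \<le> \<theta>"
  shows "energy P F v - energy P F ustar \<le> L \<theta> / 2 * (norm (v - ustar))\<^sup>2"
  unfolding energy_error_eq[OF assms(1)] by (rule potential_remainder_le[where L = L, OF POT LIP assms(2,3)])

lemma zarantonello_residual:
  assumes z: "\<forall>v\<in>V. inner z v = zar_rhs A F \<delta> w v" and "v \<in> V"
  shows "inner (z - w) v = \<delta> * (A ustar v - A w v)"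
  using z galerkin[OF \<open>v \<in> V\<close>] \<open>v \<in> V\<close> by (simp add: zar_rhs_def inner_diff_left)

lemma norm_zarantonello_update_ge:
  assumes z: "\<forall>v\<in>V. inner z v = zar_rhs A F \<delta> w v" and "w \<in> V" and "\<delta> > 0"
  shows "\<delta> * \<alpha> * norm (ustar - w) \<le> norm (z - w)"
proof -
  have "\<delta> * (\<alpha> * (norm (ustar - w))\<^sup>2) \<le> \<delta> * (A ustar (ustar - w) - A w (ustar - w))"
    using SM[of ustar w] \<open>\<delta> > 0\<close> by (intro mult_left_mono) auto
  also have "\<dots> = inner (z - w) (ustar - w)"
    using zarantonello_residual[OF z] ustar_in \<open>w \<in> V\<close> V_sub by (simp add: subspace_diff)
  also have "\<dots> \<le> norm (z - w) * norm (ustar - w)"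
    by (rule norm_cauchy_schwarz)
  finally show ?thesis
    by (cases "ustar = w") (auto simp: power2_eq_square)
qed

lemma norm_zarantonello_update_le:
  assumes z: "z \<in> V" "\<forall>v\<in>V. inner z v = zar_rhs A F \<delta> w v" and "w \<in> V" and "\<delta> > 0"
    and "\<theta> > 0" and "norm ustar \<le> \<theta>" and "norm (ustar - w) \<le> \<theta>"
  shows "norm (z - w) \<le> \<delta> * L \<theta> * norm (ustar - w)"
proof -
  have "(norm (z - w))\<^sup>2 = \<delta> * (A ustar (z - w) - A w (z - w))"
    using zarantonello_residual[OF z(2)] z(1) \<open>w \<in> V\<close> V_sub
    by (simp add: subspace_diff power2_norm_eq_inner)
  also have "\<dots> \<le> \<delta> * (L \<theta> * norm (ustar - w) * norm (z - w))"
    using LIP[OF \<open>\<theta> > 0\<close>, of ustar w "z - w"] assms(4-7) by (intro mult_left_mono) auto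
  finally show ?thesis
    using \<open>\<delta> > 0\<close> LIP_pos[OF \<open>\<theta> > 0\<close>]
    by (cases "z = w") (auto simp: power2_eq_square)
qed

lemma energy_decrease_ge:
  assumes z: "\<forall>v\<in>V. inner z v = zar_rhs A F \<delta> w v" and "w \<in> V" "y \<in> V"
    and closer: "norm (z - y) \<le> norm (z - w)" and "\<delta> > 0"
    and "\<theta> > 0" and "norm w + norm (y - w) \<le> \<theta>"
  shows "(1 / \<delta> - L \<theta>) / 2 * (norm (y - w))\<^sup>2 \<le> energy P F w - energy P F y"
proof -
  define d where "d = y - w"
  have "(norm (z - w - d))\<^sup>2 = (norm (z - w))\<^sup>2 - 2 * inner (z - w) d + (norm d)\<^sup>2"
    by (simp add: power2_norm_eq_inner inner_diff_left inner_diff_right inner_commute)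
  moreover have "norm (z - w - d) \<le> norm (z - w)"
    using closer unfolding d_def by simp
  ultimately have "(norm d)\<^sup>2 / 2 \<le> inner (z - w) d"
    using power_mono[of "norm (z - w - d)" "norm (z - w)" 2] by simp
  also have "inner (z - w) d = \<delta> * (F d - A w d)"
    using zarantonello_residual[OF z] galerkin assms(2,3) V_sub by (simp add: d_def subspace_diff)
  finally have "(norm d)\<^sup>2 / 2 / \<delta> \<le> F d - A w d"
    using \<open>\<delta> > 0\<close> by (simp add: field_simps)
  moreover have "P (w + d) - P w - A w d \<le> L \<theta> / 2 * (norm d)\<^sup>2"
    using potential_remainder_le[where L = L, OF POT LIP \<open>\<theta> > 0\<close>] assms(7) unfolding d_def by blast
  moreover have "F y = F w + F d"
    using linear_diff[OF linear_F] unfolding d_def by simp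
  ultimately show ?thesis
    unfolding d_def energy_def by (simp add: field_simps)
qed

lemma norm_zarantonello_update_le_radius:
  assumes z: "z \<in> V" "\<forall>v\<in>V. inner z v = zar_rhs A F \<delta> w v" and "w \<in> V"
    and "0 < \<tau>" "norm w \<le> \<tau>" "4 * norm ustar \<le> \<tau>" and "0 < \<delta>" "\<delta> * L (2 * \<tau>) \<le> 2"
  shows "norm (z - w) \<le> 5 / 2 * \<tau>"
proof -
  have "norm (ustar - w) \<le> 5 / 4 * \<tau>"
    using norm_triangle_ineq4[of ustar w] assms(5,6) by simp
  then have "norm (z - w) \<le> \<delta> * L (2 * \<tau>) * norm (ustar - w)"
    using assms(4,6) by (intro norm_zarantonello_update_le[OF z \<open>w \<in> V\<close> \<open>0 < \<delta>\<close>]) auto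
  also have "\<dots> \<le> 2 * (5 / 4 * \<tau>)"
    using \<open>norm (ustar - w) \<le> 5 / 4 * \<tau>\<close> assms(7,8) by (intro mult_mono) auto
  finally show ?thesis
    by simp
qed

lemma perturbed_step_energy_contraction:
  assumes z: "z \<in> V" "\<forall>v\<in>V. inner z v = zar_rhs A F \<delta> w v" and "w \<in> V" "y \<in> V"
    and near: "norm (z - y) \<le> qalg ^ imin * norm (z - w)"
    and q: "0 \<le> qalg ^ imin" "qalg ^ imin \<le> 1 / 3"
    and "0 < \<tau>" "norm w \<le> \<tau>" "4 * norm ustar \<le> \<tau>"
    and "0 < \<delta>" "\<delta> * L (2 * \<tau>) \<le> 2" "\<delta> * L (5 * \<tau>) < 1"
  shows "(1 - qE2 L \<alpha> qalg imin \<tau> \<delta>) * (energy P F w - energy P F ustar)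
    \<le> energy P F w - energy P F y"
proof -
  define q where "q = qalg ^ imin"
  define c where "c = 1 / \<delta> - L (5 * \<tau>)"
  have "L (2 * \<tau>) > 0" "0 \<le> c"
    using LIP_pos \<open>0 < \<tau>\<close> \<open>0 < \<delta>\<close> \<open>\<delta> * L (5 * \<tau>) < 1\<close> by (auto simp: c_def field_simps)
  have update: "norm (z - w) \<le> 5 / 2 * \<tau>"
    by (rule norm_zarantonello_update_le_radius[OF z assms(3,8-12)])
  have "norm (y - w) \<le> (1 + q) * norm (z - w)"
    using norm_increment_bounds(2)[OF near] unfolding q_def .
  also have "\<dots> \<le> 4 / 3 * (5 / 2 * \<tau>)"
    using update q unfolding q_def by (intro mult_mono) auto
  finally have "norm w + norm (y - w) \<le> 5 * \<tau>"
    using \<open>norm w \<le> \<tau>\<close> \<open>0 < \<tau>\<close> by linarith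
  moreover have "norm (z - y) \<le> norm (z - w)"
    using near q mult_right_mono[of "qalg ^ imin" 1 "norm (z - w)"] by simp
  ultimately have decrease: "c / 2 * (norm (y - w))\<^sup>2 \<le> energy P F w - energy P F y"
    unfolding c_def using energy_decrease_ge[OF z(2) \<open>w \<in> V\<close> \<open>y \<in> V\<close>] \<open>0 < \<tau>\<close> \<open>0 < \<delta>\<close> by simp
  have "norm ustar + norm (w - ustar) \<le> 2 * \<tau>"
    using norm_triangle_ineq4[of w ustar] norm_ge_zero[of ustar] assms(9,10) by linarith
  then have error: "energy P F w - energy P F ustar \<le> L (2 * \<tau>) / 2 * (norm (ustar - w))\<^sup>2"
    using energy_error_le[OF \<open>w \<in> V\<close>] \<open>0 < \<tau>\<close> by (simp add: norm_minus_commute)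
  have one_minus_qE2: "1 - qE2 L \<alpha> qalg imin \<tau> \<delta> = c * ((1 - q)\<^sup>2 * \<delta>\<^sup>2 * \<alpha>\<^sup>2) / L (2 * \<tau>)"
    by (simp add: qE2_def c_def q_def)
  have "(1 - qE2 L \<alpha> qalg imin \<tau> \<delta>) * (energy P F w - energy P F ustar)
      \<le> (1 - qE2 L \<alpha> qalg imin \<tau> \<delta>) * (L (2 * \<tau>) / 2 * (norm (ustar - w))\<^sup>2)"
    using error \<open>0 \<le> c\<close> \<open>L (2 * \<tau>) > 0\<close> unfolding one_minus_qE2 by (intro mult_left_mono) auto
  also have "\<dots> = c / 2 * ((1 - q) * (\<delta> * \<alpha> * norm (ustar - w)))\<^sup>2"
    unfolding one_minus_qE2 using \<open>L (2 * \<tau>) > 0\<close> by (simp add: power_mult_distrib)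
  also have "\<dots> \<le> c / 2 * ((1 - q) * norm (z - w))\<^sup>2"
    using norm_zarantonello_update_ge[OF z(2) \<open>w \<in> V\<close> \<open>0 < \<delta>\<close>] \<open>0 \<le> c\<close> q SM_pos \<open>0 < \<delta>\<close>
    by (intro mult_left_mono power_mono) (auto simp: q_def)
  also have "\<dots> \<le> c / 2 * (norm (y - w))\<^sup>2"
    using norm_increment_bounds(1)[OF near] \<open>0 \<le> c\<close> q
    by (intro mult_left_mono power_mono) (auto simp: q_def)
  finally show ?thesis
    using decrease by linarith
qed

end

lemma step_size_bounds:
  fixes \<alpha> \<delta> l2 l5 :: real
  assumes "0 < \<alpha>" "\<alpha> \<le> l2" "0 < l5" and "0 < \<delta>" "\<delta> < min (1 / l5) (2 * \<alpha> / l2\<^sup>2)"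
  shows "\<delta> * l2 \<le> 2" and "\<delta> * l5 < 1"
proof -
  have "\<delta> * l2 * l2 < 2 * \<alpha>"
    using assms by (simp add: field_simps power2_eq_square)
  then have "\<delta> * l2 * l2 < 2 * l2"
    using \<open>\<alpha> \<le> l2\<close> by linarith
  then show "\<delta> * l2 \<le> 2"
    using assms(1,2) by simp
  show "\<delta> * l5 < 1"
    using assms by (simp add: field_simps)
qed

lemma qE2_eq:
  assumes "\<delta> > 0"
  shows "qE2 L \<alpha> qalg imin \<tau> \<delta>
    = 1 - (\<delta> - L (5 * \<tau>) * \<delta>\<^sup>2) * ((1 - qalg ^ imin)\<^sup>2 * \<alpha>\<^sup>2 / L (2 * \<tau>))"
proof -
  have "(1 / \<delta> - L (5 * \<tau>)) * \<delta>\<^sup>2 = \<delta> - L (5 * \<tau>) * \<delta>\<^sup>2"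
    using assms by (simp add: power2_eq_square left_diff_distrib)
  moreover have "qE2 L \<alpha> qalg imin \<tau> \<delta>
      = 1 - ((1 / \<delta> - L (5 * \<tau>)) * \<delta>\<^sup>2) * ((1 - qalg ^ imin)\<^sup>2 * \<alpha>\<^sup>2 / L (2 * \<tau>))"
    unfolding qE2_def by (simp add: ac_simps)
  ultimately show ?thesis
    by simp
qed

lemma qE2_bounds:
  assumes "0 < \<alpha>" "\<alpha> \<le> L (2 * \<tau>)" "\<alpha> \<le> L (5 * \<tau>)"
    and "0 \<le> qalg ^ imin" "qalg ^ imin < 1" and "0 < \<delta>" "\<delta> * L (5 * \<tau>) < 1"
  shows "0 \<le> qE2 L \<alpha> qalg imin \<tau> \<delta>" and "qE2 L \<alpha> qalg imin \<tau> \<delta> < 1"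
proof -
  define a where "a = \<delta> - L (5 * \<tau>) * \<delta>\<^sup>2"
  define b where "b = (1 - qalg ^ imin)\<^sup>2 * \<alpha>\<^sup>2 / L (2 * \<tau>)"
  have "0 < a"
    using assms(6,7) by (simp add: a_def power2_eq_square algebra_simps)
  have "0 < b"
    using assms(1,2,5) by (simp add: b_def)
  have "(1 - qalg ^ imin)\<^sup>2 \<le> 1"
    using assms(4,5) by (simp add: power_le_one)
  moreover have "\<alpha>\<^sup>2 \<le> L (5 * \<tau>) * L (2 * \<tau>)"
    using assms(1-3) by (simp add: power2_eq_square mult_mono)
  ultimately have "(1 - qalg ^ imin)\<^sup>2 * \<alpha>\<^sup>2 \<le> 1 * (L (5 * \<tau>) * L (2 * \<tau>))"
    by (intro mult_mono) auto
  then have "b \<le> L (5 * \<tau>)"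
    using assms(1,2) by (simp add: b_def divide_le_eq)
  have "a * L (5 * \<tau>) \<le> 1 / 4"
    using zero_le_power2[of "1 - 2 * L (5 * \<tau>) * \<delta>"]
    by (simp add: a_def power2_eq_square algebra_simps)
  moreover have "a * b \<le> a * L (5 * \<tau>)"
    using \<open>b \<le> L (5 * \<tau>)\<close> \<open>0 < a\<close> by (intro mult_left_mono) auto
  ultimately have "a * b \<le> 1"
    by linarith
  moreover have "0 < a * b"
    using \<open>0 < a\<close> \<open>0 < b\<close> by simp
  ultimately show "0 \<le> qE2 L \<alpha> qalg imin \<tau> \<delta>" and "qE2 L \<alpha> qalg imin \<tau> \<delta> < 1"
    unfolding qE2_eq[OF \<open>0 < \<delta>\<close>] a_def[symmetric] b_def[symmetric] by simp_all
qed

lemma qE2_tendsto_one: "((\<lambda>d. sqrt (qE2 L \<alpha> qalg imin \<tau> d)) \<longlongrightarrow> 1) (at_right 0)"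
proof -
  define b where "b = (1 - qalg ^ imin)\<^sup>2 * \<alpha>\<^sup>2 / L (2 * \<tau>)"
  have "((\<lambda>d. sqrt (1 - (d - L (5 * \<tau>) * d\<^sup>2) * b)) \<longlongrightarrow> sqrt (1 - (0 - L (5 * \<tau>) * 0\<^sup>2) * b))
      (at_right 0)"
    by (intro tendsto_intros)
  moreover have "eventually (\<lambda>d. sqrt (1 - (d - L (5 * \<tau>) * d\<^sup>2) * b)
      = sqrt (qE2 L \<alpha> qalg imin \<tau> d)) (at_right 0)"
    by (auto simp: eventually_at_right_field qE2_eq b_def intro: exI[of _ 1])
  ultimately show ?thesis
    by (auto intro: Lim_transform_eventually)
qed

theorem lemma8:
  fixes A :: "'a::{real_inner, complete_space} \<Rightarrow> 'a \<Rightarrow> real"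
    and F P :: "'a \<Rightarrow> real"
    and \<alpha> qalg lam_lin lam_alg \<delta> M \<tau> :: real
    and L :: "real \<Rightarrow> real"
    and V :: "'a set"
    and \<Psi> :: "('a \<Rightarrow> real) \<Rightarrow> 'a \<Rightarrow> 'a"
    and \<eta> :: "'a \<Rightarrow> real"
    and imin k :: nat
    and u0 ustar :: 'a
  assumes A_bl: "\<And>w. bounded_linear (A w)"
    and F_bl: "bounded_linear F"
    and A0: "A 0 \<noteq> F"
    and SM_pos: "\<alpha> > 0"
    and SM: "\<And>v w. \<alpha> * (norm (v - w))\<^sup>2 \<le> A v (v - w) - A w (v - w)"
    and LIP_pos: "\<And>\<theta>. \<theta> > 0 \<Longrightarrow> L \<theta> > 0"
    and LIP: "\<And>\<theta> v w \<phi>. \<theta> > 0 \<Longrightarrow> max (norm v) (norm (v - w)) \<le> \<theta> \<Longrightarrow>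
                 A v \<phi> - A w \<phi> \<le> L \<theta> * norm (v - w) * norm \<phi>"
    and POT: "\<And>v w. ((\<lambda>t. (P (w + t *\<^sub>R v) - P w) / t) \<longlongrightarrow> A w v) (at 0)"
    and V_sub: "subspace V"
    and V_fin: "\<exists>B. finite B \<and> V = span B"
    and ustar: "ustar \<in> V" "\<And>v. v \<in> V \<Longrightarrow> A ustar v = F v"
    and qalg: "0 < qalg" "qalg < 1"
    and Psi: "\<And>\<phi> ws w. bounded_linear \<phi> \<Longrightarrow> ws \<in> V \<Longrightarrow> (\<forall>v\<in>V. inner ws v = \<phi> v) \<Longrightarrow> w \<in> V \<Longrightarrow>
                 \<Psi> \<phi> w \<in> V \<and> norm (ws - \<Psi> \<phi> w) \<le> qalg * norm (ws - w)"
    and eta_nonneg: "\<And>v. 0 \<le> \<eta> v"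
    and lam: "lam_lin > 0" "lam_alg > 0"
    and imin: "1 \<le> imin" "qalg ^ imin \<le> 1 / 3"
    and M_def: "M = onorm (\<lambda>v. F v - A 0 v) / \<alpha>"
    and tau_def: "\<tau> = M + 3 * M * sqrt (L (3 * M) / \<alpha>)"
    and u0: "u0 \<in> V" "norm u0 \<le> 2 * M"
    and k_lt: "enat k < lin_index \<Psi> A F P \<delta> \<eta> lam_lin lam_alg imin M u0"
    and k_bd: "norm (ail_iterate \<Psi> A F \<delta> \<eta> lam_lin lam_alg imin u0 k) \<le> \<tau>"
    and delta: "0 < \<delta>" "\<delta> < min (1 / L (5 * \<tau>)) (2 * \<alpha> / (L (2 * \<tau>))\<^sup>2)"
  shows "4 * M \<le> \<tau>
    \<and> 0 \<le> energy P F (ail_iterate \<Psi> A F \<delta> \<eta> lam_lin lam_alg imin u0 (Suc k)) - energy P F ustar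
    \<and> energy P F (ail_iterate \<Psi> A F \<delta> \<eta> lam_lin lam_alg imin u0 (Suc k)) - energy P F ustar
        \<le> qE2 L \<alpha> qalg imin \<tau> \<delta> *
           (energy P F (ail_iterate \<Psi> A F \<delta> \<eta> lam_lin lam_alg imin u0 k) - energy P F ustar)
    \<and> 0 \<le> qE2 L \<alpha> qalg imin \<tau> \<delta> \<and> qE2 L \<alpha> qalg imin \<tau> \<delta> < 1
    \<and> ((\<lambda>d. sqrt (qE2 L \<alpha> qalg imin \<tau> d)) \<longlongrightarrow> 1) (at_right 0)
    \<and> (1 - qE2 L \<alpha> qalg imin \<tau> \<delta>) *
        (energy P F (ail_iterate \<Psi> A F \<delta> \<eta> lam_lin lam_alg imin u0 k) - energy P F ustar)
      \<le> energy P F (ail_iterate \<Psi> A F \<delta> \<eta> lam_lin lam_alg imin u0 k)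
         - energy P F (ail_iterate \<Psi> A F \<delta> \<eta> lam_lin lam_alg imin u0 (Suc k))
    \<and> energy P F (ail_iterate \<Psi> A F \<delta> \<eta> lam_lin lam_alg imin u0 k)
         - energy P F (ail_iterate \<Psi> A F \<delta> \<eta> lam_lin lam_alg imin u0 (Suc k))
      \<le> energy P F (ail_iterate \<Psi> A F \<delta> \<eta> lam_lin lam_alg imin u0 k) - energy P F ustar"
proof -
  interpret strongly_monotone_galerkin A F P \<alpha> L V ustar
    using A_bl F_bl SM_pos SM LIP_pos LIP POT V_sub ustar by (simp add: strongly_monotone_galerkin_def)
  let ?E = "energy P F"
  let ?u = "ail_iterate \<Psi> A F \<delta> \<eta> lam_lin lam_alg imin u0"
  note radius = radius_bounds[OF A0 M_def tau_def]
  then have "0 < \<tau>"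
    by simp
  have L_ge: "\<alpha> \<le> L (2 * \<tau>)" "\<alpha> \<le> L (5 * \<tau>)"
    using alpha_le_L[OF A0] \<open>0 < \<tau>\<close> by auto
  have "0 < L (5 * \<tau>)"
    using LIP_pos \<open>0 < \<tau>\<close> by simp
  note step_size = step_size_bounds[OF SM_pos L_ge(1) this delta]
  have solver: "contractive_solver V \<Psi> qalg"
    using Psi by (simp add: contractive_solver_def)
  obtain B where "finite B" "V = span B"
    using V_fin by blast
  then obtain z where z: "z \<in> V" "\<forall>v\<in>V. inner z v = zar_rhs A F \<delta> (?u k) v"
    and u: "?u k \<in> V" "?u (Suc k) \<in> V" "norm (z - ?u (Suc k)) \<le> qalg ^ imin * norm (z - ?u k)"
    by (rule ail_iterate_step_contraction[OF solver less_imp_le[OF qalg(1)] qalg(2) lam eta_nonneg A_bl F_bl _ _ u0(1)])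
  have "(1 - qE2 L \<alpha> qalg imin \<tau> \<delta>) * (?E (?u k) - ?E ustar) \<le> ?E (?u k) - ?E (?u (Suc k))"
    by (rule perturbed_step_energy_contraction[OF z u zero_le_power[OF less_imp_le[OF qalg(1)]]
          imin(2) \<open>0 < \<tau>\<close> k_bd radius(3) delta(1) step_size])
  moreover have "0 \<le> ?E (?u (Suc k)) - ?E ustar"
    using energy_error_nonneg u(2) .
  moreover have "0 \<le> qE2 L \<alpha> qalg imin \<tau> \<delta>" "qE2 L \<alpha> qalg imin \<tau> \<delta> < 1"
    using qE2_bounds[OF SM_pos L_ge zero_le_power[OF less_imp_le[OF qalg(1)]] _ delta(1) step_size(2)]
      imin(2) by simp_all
  ultimately show ?thesis
    using radius(2) qE2_tendsto_one by (auto simp: left_diff_distrib)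
qed

end
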